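(* Let $(X,d,\mu)$ be a proper metric measure space whose measure $\mu$ is continuous with respect to $d$. Let $1<p<\infty$, and let $\rho=\{\rho_x\}_{x\in X}$ be a family of norms on $\mathbb{C}^d$ such that for every $x\in X$ there is a positive-definite self-adjoint matrix $W_x$ with $\rho_x(\mathbf{v})\le|W_x\mathbf{v}|\le d^{1/2}\rho_x(\mathbf{v})$ for all $\mathbf{v}\in\mathbb{C}^d$, where $x\mapsto W_x$ is an invertible matrix weight on $X$ and $\|W_x\|_{op}^p,\ \|W_x^{-1}\|_{op}^{p'}\in L^1_{\rm loc}(X,d,\mu)$, $p'=p/(p-1)$. A subset $\mathcal{F}\subset L^p(\rho,\mu)$ is totally bounded if: (a) $\sup_{\mathbf{f}\in\mathcal{F}}\|\mathbf{f}\|_{L^p(\rho,\mu)}<\infty$; (b) for some $x_0\in X$, $\lim_{R\to\infty}\sup_{\mathbf{f}\in\mathcal{F}}\|\mathbf{f}\chi_{X\setminus B(x_0,R)}\|_{L^p(\rho,\mu)}=0$; (c) $\lim_{r\to0}\sup_{\mathbf{f}\in\mathcal{F}}\|S_r\mathbf{f}-\mathbf{f}\|_{L^p(\rho,\mu)}=0$, where $S_r\mathbf{f}(x):=\frac{1}{\mu[B(x,r)]}\int_{B(x,r)}\mathbf{f}(y)\,d\mu(y)$.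
   Context: $(X,d,\mu)$: metric space with a positive Borel regular measure $\mu$ such that every nonempty open set has positive measure and every bounded set has finite measure; $B(x,r)=\{y:d(x,y)<r\}$. Proper: every closed bounded set is compact. $\mu$ is continuous with respect to $d$ if for all $x\in X$, $r>0$, $\lim_{y\to x}\mu[B(x,r)\Delta B(y,r)]=0$. A matrix weight on $X$ is a $\mu$-measurable map $W:X\to\mathcal{S}_d$ (self-adjoint non-negative-definite complex $d\times d$ matrices) with $\|W\|_{op}\in L^1_{\rm loc}(X,d,\mu)$; invertible means $\det W(x)\neq0$ $\mu$-a.e. It is assumed that $x\mapsto\rho_x(\mathbf{f}(x))$ is $\mu$-measurable for all $\mu$-measurable $\mathbf{f}$. $L^p(\rho,\mu)$ consists of $\mu$-measurable $\mathbf{f}:X\to\mathbb{C}^d$ with $\|\mathbf{f}\|^p_{L^p(\rho,\mu)}:=\int_X[\rho_x(\mathbf{f}(x))]^pd\mu(x)<\infty$. *)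

theory Defs
  imports "HOL-Analysis.Analysis"
begin

definition adjointM :: "complex^'n^'n \<Rightarrow> complex^'n^'n" where
  "adjointM A = (\<chi> i j. cnj (A $ j $ i))"

definition cinner :: "complex^'n \<Rightarrow> complex^'n \<Rightarrow> complex" where
  "cinner v w = (\<Sum>i\<in>UNIV. cnj (v $ i) * w $ i)"

definition self_adjoint :: "complex^'n^'n \<Rightarrow> bool" where
  "self_adjoint A \<longleftrightarrow> adjointM A = A"

definition pos_semidef :: "complex^'n^'n \<Rightarrow> bool" where
  "pos_semidef A \<longleftrightarrow> (\<forall>v. 0 \<le> Re (cinner v (A *v v)))"

definition pos_def :: "complex^'n^'n \<Rightarrow> bool" where
  "pos_def A \<longleftrightarrow> (\<forall>v. v \<noteq> 0 \<longrightarrow> 0 < Re (cinner v (A *v v)))"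

definition opnorm :: "complex^'n^'n \<Rightarrow> real" where
  "opnorm A = onorm (\<lambda>v. A *v v)"

definition is_cnorm :: "(complex^'n \<Rightarrow> real) \<Rightarrow> bool" where
  "is_cnorm N \<longleftrightarrow> (\<forall>v. 0 \<le> N v) \<and> (\<forall>v. N v = 0 \<longleftrightarrow> v = 0)
     \<and> (\<forall>c v. N (c *s v) = cmod c * N v) \<and> (\<forall>v w. N (v + w) \<le> N v + N w)"

text \<open>Local integrability: integrable on every ball (equivalently, on every bounded set).\<close>
definition loc_integrable :: "'a::metric_space measure \<Rightarrow> ('a \<Rightarrow> real) \<Rightarrow> bool" where
  "loc_integrable M g \<longleftrightarrow> g \<in> borel_measurable M \<and> (\<forall>x r. set_integrable M (ball x r) g)"

definition matrix_weight :: "'a::metric_space measure \<Rightarrow> ('a \<Rightarrow> complex^'n^'n) \<Rightarrow> bool" where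
  "matrix_weight M W \<longleftrightarrow> W \<in> borel_measurable M
     \<and> (\<forall>x. self_adjoint (W x) \<and> pos_semidef (W x))
     \<and> loc_integrable M (\<lambda>x. opnorm (W x))"

definition invertible_matrix_weight :: "'a::metric_space measure \<Rightarrow> ('a \<Rightarrow> complex^'n^'n) \<Rightarrow> bool" where
  "invertible_matrix_weight M W \<longleftrightarrow> matrix_weight M W \<and> (AE x in M. det (W x) \<noteq> 0)"

definition Lp_int :: "('a \<Rightarrow> complex^'n \<Rightarrow> real) \<Rightarrow> real \<Rightarrow> 'a measure \<Rightarrow> ('a \<Rightarrow> complex^'n) \<Rightarrow> ennreal" where
  "Lp_int \<rho> p M f = (\<integral>\<^sup>+x. ennreal ((\<rho> x (f x)) powr p) \<partial>M)"

definition Lp_norm :: "('a \<Rightarrow> complex^'n \<Rightarrow> real) \<Rightarrow> real \<Rightarrow> 'a measure \<Rightarrow> ('a \<Rightarrow> complex^'n) \<Rightarrow> ennreal" where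
  "Lp_norm \<rho> p M f = (if Lp_int \<rho> p M f = \<infinity> then \<infinity>
                       else ennreal ((enn2real (Lp_int \<rho> p M f)) powr (1 / p)))"

definition Lp_space :: "('a \<Rightarrow> complex^'n \<Rightarrow> real) \<Rightarrow> real \<Rightarrow> 'a measure \<Rightarrow> ('a \<Rightarrow> complex^'n) set" where
  "Lp_space \<rho> p M = {f. f \<in> borel_measurable M \<and> Lp_int \<rho> p M f < \<infinity>}"

definition Lp_totally_bounded :: "('a \<Rightarrow> complex^'n \<Rightarrow> real) \<Rightarrow> real \<Rightarrow> 'a measure \<Rightarrow> ('a \<Rightarrow> complex^'n) set \<Rightarrow> bool" where
  "Lp_totally_bounded \<rho> p M F \<longleftrightarrow>
     (\<forall>e>0. \<exists>K. finite K \<and> K \<subseteq> F \<and>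
        (\<forall>f\<in>F. \<exists>g\<in>K. Lp_norm \<rho> p M (\<lambda>x. f x - g x) < ennreal e))"

definition avg_op :: "'a::metric_space measure \<Rightarrow> real \<Rightarrow> ('a \<Rightarrow> complex^'n) \<Rightarrow> 'a \<Rightarrow> complex^'n" where
  "avg_op M r f x = (1 / measure M (ball x r)) *\<^sub>R (LINT y:ball x r|M. f y)"

end

theory Submission
  imports Defs
begin

(* Fix eps > 0.  By (b) and (c) there are R and r such that, up to an L^p(rho) error of order eps,
   every f in F coincides with its average S_r f on the ball B(x0, R).  Since
   |v| <= sqrt d |W_x^-1| rho_x(v) and |W^-1|^p' is locally integrable, Young's inequality bounds the
   integral of |f| over a set D, uniformly in f in F, by the |W^-1|^p'-mass of D plus a small multiple
   of the bound (a).  Together with the continuity of mu this makes {S_r f | f in F} uniformly bounded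
   and equicontinuous, so, as in the Arzela-Ascoli theorem, it has a finite uniform delta-net on the
   compact closed ball.  Since rho_x(v) <= |W_x| |v| and |W|^p is locally integrable, that net is an
   eps-net of F in L^p(rho). *)

lemma powr_add3_le:
  fixes u v w p :: real
  assumes "0 \<le> u" "0 \<le> v" "0 \<le> w" "0 \<le> p"
  shows "(u + v + w) powr p \<le> 3 powr p * (u powr p + v powr p + w powr p)"
proof -
  define m where "m = max u (max v w)"
  have "(u + v + w) powr p \<le> (3 * m) powr p"
    using assms by (intro powr_mono2) (auto simp: m_def)
  also have "\<dots> = 3 powr p * m powr p"
    using assms by (simp add: powr_mult m_def)
  also have "m powr p \<le> u powr p + v powr p + w powr p"
    by (cases "m = u"; cases "m = v") (auto simp: m_def max_def split: if_splits)
  finally show ?thesis by simp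
qed

lemma Youngs_inequality_weighted:
  fixes a b p q \<epsilon> :: real
  assumes "1 < p" "1/p + 1/q = 1" "0 \<le> a" "0 \<le> b" "0 < \<epsilon>"
  shows "a * b \<le> \<epsilon> powr (1 - q) * a powr q + \<epsilon> * b powr p"
proof -
  have "0 < 1 / p" "1 / p < 1"
    using assms(1) by auto
  then have "0 < 1 / q" "1 / q < 1"
    using assms(2) by linarith+
  then have "1 < q"
    by (auto simp: divide_less_eq zero_less_divide_iff)
  moreover from this have "q / p = q - 1"
    using assms(1,2) by (auto simp: field_simps)
  ultimately have q: "1 < q" "q / p = q - 1"
    by blast+
  define t where "t = \<epsilon> powr (1 / p)"
  have t: "0 < t" "t powr p = \<epsilon>" "t powr (- q) = \<epsilon> powr (1 - q)"
    using assms q by (auto simp: t_def powr_powr)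
  have "a * b = (a / t) * (t * b)"
    using t by simp
  also have "\<dots> \<le> (a / t) powr q / q + (t * b) powr p / p"
    using Youngs_inequality[of q p "a / t" "t * b"] assms q t by (simp add: add.commute)
  also have "\<dots> \<le> (a / t) powr q + (t * b) powr p"
  proof -
    have div_le: "x / c \<le> x" if "0 \<le> x" "1 \<le> c" for x c :: real
      using that mult_left_mono[of 1 c x] by (simp add: divide_le_eq)
    show ?thesis
      using assms q by (intro add_mono div_le) auto
  qed
  also have "(a / t) powr q = t powr (- q) * a powr q"
    using assms(3) t(1) by (simp add: powr_divide powr_minus_divide)
  also have "(t * b) powr p = t powr p * b powr p"
    using assms t by (simp add: powr_mult)
  finally show ?thesis
    by (simp only: t(2,3))
qed

lemma nn_integral_excess_tendsto_0:
  fixes g :: "'a \<Rightarrow> real"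
  assumes [measurable]: "g \<in> borel_measurable M" and "(\<integral>\<^sup>+x. ennreal (g x) \<partial>M) < \<infinity>"
  shows "(\<lambda>i. \<integral>\<^sup>+x. ennreal (max (g x - real i) 0) \<partial>M) \<longlonglongrightarrow> 0"
proof -
  have "(\<lambda>i. \<integral>\<^sup>+x. ennreal (max (g x - real i) 0) \<partial>M) \<longlonglongrightarrow> (\<integral>\<^sup>+x. 0 \<partial>M)"
  proof (rule nn_integral_dominated_convergence[where w="\<lambda>x. ennreal (g x)"])
    show "AE x in M. ennreal (max (g x - real i) 0) \<le> ennreal (g x)" for i
    proof (intro AE_I2)
      fix x
      show "ennreal (max (g x - real i) 0) \<le> ennreal (g x)"
        by (cases "0 \<le> g x") (auto intro!: ennreal_leI)
    qed
    show "AE x in M. (\<lambda>i. ennreal (max (g x - real i) 0)) \<longlonglongrightarrow> 0"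
    proof (intro AE_I2 tendsto_eventually)
      fix x
      obtain N :: nat where "g x \<le> real N"
        using real_arch_simple by blast
      then show "\<forall>\<^sub>F i in sequentially. ennreal (max (g x - real i) 0) = 0"
        unfolding eventually_sequentially by (intro exI[of _ N]) auto
    qed
  qed (use assms in auto)
  then show ?thesis
    by simp
qed

lemma nn_integral_absolutely_continuous:
  fixes g :: "'a \<Rightarrow> real"
  assumes [measurable]: "g \<in> borel_measurable M"
    and finite: "(\<integral>\<^sup>+x. ennreal (g x) \<partial>M) < \<infinity>" and "0 < e"
  obtains \<delta> where "0 < \<delta>"
    "\<And>A. A \<in> sets M \<Longrightarrow> emeasure M A < ennreal \<delta> \<Longrightarrow> (\<integral>\<^sup>+x\<in>A. ennreal (g x) \<partial>M) < ennreal e"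
proof -
  have "\<forall>\<^sub>F i in sequentially. (\<integral>\<^sup>+x. ennreal (max (g x - real i) 0) \<partial>M) < ennreal (e / 2)"
    using \<open>0 < e\<close> by (intro order_tendstoD(2)[OF nn_integral_excess_tendsto_0[OF assms(1) finite]]) auto
  then obtain i where i: "(\<integral>\<^sup>+x. ennreal (max (g x - real i) 0) \<partial>M) < ennreal (e / 2)"
    using eventually_sequentially by auto
  define \<delta> where "\<delta> = e / (2 * (real i + 1))"
  have "0 < \<delta>"
    using \<open>0 < e\<close> by (simp add: \<delta>_def)
  show ?thesis
  proof (rule that[OF \<open>0 < \<delta>\<close>])
    fix A assume [measurable]: "A \<in> sets M" and A: "emeasure M A < ennreal \<delta>"
    \<comment> \<open>below height \<open>i\<close> the integral over \<open>A\<close> is at most \<open>i \<mu>(A)\<close>; the excess is small globally\<close>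
    have "(\<integral>\<^sup>+x\<in>A. ennreal (g x) \<partial>M)
        \<le> (\<integral>\<^sup>+x. ennreal (real i) * indicator A x + ennreal (max (g x - real i) 0) \<partial>M)"
    proof (intro nn_integral_mono)
      fix x
      have "ennreal (g x) \<le> ennreal (real i + max (g x - real i) 0)"
        by (intro ennreal_leI) auto
      then show "ennreal (g x) * indicator A x \<le> ennreal (real i) * indicator A x + ennreal (max (g x - real i) 0)"
        by (auto simp: ennreal_plus split: split_indicator)
    qed
    also have "\<dots> = ennreal (real i) * emeasure M A + (\<integral>\<^sup>+x. ennreal (max (g x - real i) 0) \<partial>M)"
      by (subst nn_integral_add) (auto simp: nn_integral_cmult_indicator)
    also have "\<dots> \<le> ennreal (e / 2) + (\<integral>\<^sup>+x. ennreal (max (g x - real i) 0) \<partial>M)"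
    proof (rule add_right_mono)
      have "ennreal (real i) * emeasure M A \<le> ennreal (real i) * ennreal \<delta>"
        using A by (intro mult_left_mono) auto
      also have "\<dots> = ennreal (real i * \<delta>)"
        using \<open>0 < \<delta>\<close> by (simp add: ennreal_mult)
      also have "\<dots> \<le> ennreal (e / 2)"
        using \<open>0 < e\<close> by (intro ennreal_leI) (simp add: \<delta>_def field_simps)
      finally show "ennreal (real i) * emeasure M A \<le> ennreal (e / 2)" .
    qed
    also have "\<dots> < ennreal (e / 2) + ennreal (e / 2)"
      using i by (simp add: ennreal_add_left_cancel_less)
    also have "\<dots> = ennreal e"
      using \<open>0 < e\<close> by (simp flip: ennreal_plus)
    finally show "(\<integral>\<^sup>+x\<in>A. ennreal (g x) \<partial>M) < ennreal e" .
  qed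
qed

lemma loc_integrable_nn_integral_ball_finite:
  assumes "loc_integrable M g"
  shows "(\<integral>\<^sup>+x\<in>ball z r. ennreal (g x) \<partial>M) < \<infinity>"
proof -
  have "set_integrable M (ball z r) g"
    using assms by (simp add: loc_integrable_def)
  then have "(\<integral>\<^sup>+x. ennreal (norm (indicator (ball z r) x *\<^sub>R g x)) \<partial>M) < \<infinity>"
    unfolding set_integrable_def integrable_iff_bounded by simp
  moreover have "(\<integral>\<^sup>+x\<in>ball z r. ennreal (g x) \<partial>M) \<le> (\<integral>\<^sup>+x. ennreal (norm (indicator (ball z r) x *\<^sub>R g x)) \<partial>M)"
    by (intro nn_integral_mono) (auto split: split_indicator intro!: ennreal_leI)
  ultimately show ?thesis
    by (simp add: le_less_trans)
qed

lemma loc_integrable_cmult: "loc_integrable M g \<Longrightarrow> loc_integrable M (\<lambda>x. c * g x)"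
  by (auto simp: loc_integrable_def)

lemma norm_set_integral_le:
  fixes h :: "'a \<Rightarrow> 'b::{banach, second_countable_topology}"
  assumes "set_integrable M S h"
  shows "ennreal (norm (LINT y:S|M. h y)) \<le> (\<integral>\<^sup>+x\<in>S. ennreal (norm (h x)) \<partial>M)"
proof -
  have "ennreal (norm (LINT y:S|M. h y)) \<le> (\<integral>\<^sup>+x. ennreal (norm (indicator S x *\<^sub>R h x)) \<partial>M)"
    using assms unfolding set_lebesgue_integral_def set_integrable_def
    by (rule integral_norm_bound_ennreal)
  also have "\<dots> = (\<integral>\<^sup>+x\<in>S. ennreal (norm (h x)) \<partial>M)"
    by (intro nn_integral_cong) (simp split: split_indicator)
  finally show ?thesis .
qed

lemma norm_set_integral_diff_le:
  fixes h :: "'a \<Rightarrow> 'b::{banach, second_countable_topology}"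
  assumes "set_integrable M S h" "set_integrable M T h"
  shows "ennreal (norm ((LINT y:S|M. h y) - (LINT y:T|M. h y)))
    \<le> (\<integral>\<^sup>+x\<in>(S - T) \<union> (T - S). ennreal (norm (h x)) \<partial>M)"
proof -
  have "(LINT y:S|M. h y) - (LINT y:T|M. h y) = integral\<^sup>L M (\<lambda>x. indicator S x *\<^sub>R h x - indicator T x *\<^sub>R h x)"
    using assms unfolding set_lebesgue_integral_def set_integrable_def by simp
  also have "ennreal (norm \<dots>) \<le> (\<integral>\<^sup>+x. ennreal (norm (indicator S x *\<^sub>R h x - indicator T x *\<^sub>R h x)) \<partial>M)"
    using assms unfolding set_integrable_def by (intro integral_norm_bound_ennreal Bochner_Integration.integrable_diff)
  also have "\<dots> = (\<integral>\<^sup>+x\<in>(S - T) \<union> (T - S). ennreal (norm (h x)) \<partial>M)"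
    by (intro nn_integral_cong) (simp split: split_indicator)
  finally show ?thesis .
qed

section \<open>Finite nets\<close>

lemma bounded_imp_finite_ball_cover:
  fixes S :: "'a::heine_borel set"
  assumes "bounded S" "0 < e"
  obtains N where "finite N" "S \<subseteq> (\<Union>c\<in>N. ball c e)"
proof -
  have "compact (closure S)"
    using assms by simp
  then have "\<forall>\<epsilon>>0. \<exists>N. finite N \<and> closure S \<subseteq> (\<Union>c\<in>N. ball c \<epsilon>)"
    unfolding compact_eq_totally_bounded by (rule conjunct2)
  then obtain N where "finite N" and N: "closure S \<subseteq> (\<Union>c\<in>N. ball c e)"
    by (meson \<open>0 < e\<close>)
  show ?thesis
    using \<open>finite N\<close> order_trans[OF closure_subset N] by (rule that)
qed

lemma finite_net_pointwise:
  fixes \<phi> :: "'x \<Rightarrow> 'f \<Rightarrow> 'e::heine_borel"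
  assumes "finite P" "\<And>x. x \<in> P \<Longrightarrow> bounded (\<phi> x ` G)" "0 < \<eta>"
  obtains K where "finite K" "K \<subseteq> G" "\<And>f. f \<in> G \<Longrightarrow> \<exists>g\<in>K. \<forall>x\<in>P. dist (\<phi> x f) (\<phi> x g) < \<eta>"
proof -
  have "bounded (\<Union>x\<in>P. \<phi> x ` G)"
    using assms by (intro bounded_UN) auto
  then obtain N where "finite N" and N: "(\<Union>x\<in>P. \<phi> x ` G) \<subseteq> (\<Union>c\<in>N. ball c (\<eta> / 2))"
    by (rule bounded_imp_finite_ball_cover[where e = "\<eta> / 2"]) (use \<open>0 < \<eta>\<close> in simp)
  have near: "\<exists>c. c \<in> N \<and> dist c (\<phi> x f) < \<eta> / 2" if "x \<in> P" "f \<in> G" for x f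
  proof -
    have "\<phi> x f \<in> (\<Union>c\<in>N. ball c (\<eta> / 2))"
      by (rule subsetD[OF N]) (use that in blast)
    then show ?thesis
      by auto
  qed
  \<comment> \<open>pigeonhole: two members of \<open>G\<close> with the same code are \<open>\<eta>\<close>-close at every point of \<open>P\<close>\<close>
  define code where "code f = (\<lambda>x\<in>P. SOME c. c \<in> N \<and> dist c (\<phi> x f) < \<eta> / 2)" for f
  have code: "code f x \<in> N" "dist (code f x) (\<phi> x f) < \<eta> / 2" if "x \<in> P" "f \<in> G" for x f
  proof -
    have "code f x = (SOME c. c \<in> N \<and> dist c (\<phi> x f) < \<eta> / 2)"
      using \<open>x \<in> P\<close> by (simp add: code_def)
    then show "code f x \<in> N" "dist (code f x) (\<phi> x f) < \<eta> / 2"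
      using someI_ex[OF near[OF that]] by simp_all
  qed
  have "code f x = undefined" if "x \<notin> P" for f x
    using that by (simp add: code_def)
  then have "code ` G \<subseteq> (\<Pi>\<^sub>E x\<in>P. N)"
    using code(1) by (auto intro: PiE_I)
  then have "finite (code ` G)"
    using \<open>finite P\<close> \<open>finite N\<close> by (rule finite_subset[OF _ finite_PiE])
  define pick where "pick \<kappa> = (SOME f. f \<in> G \<and> code f = \<kappa>)" for \<kappa>
  have pick: "pick (code f) \<in> G" "code (pick (code f)) = code f" if "f \<in> G" for f
    using someI[of "\<lambda>g. g \<in> G \<and> code g = code f" f] that by (auto simp: pick_def)
  show ?thesis
  proof
    show "finite (pick ` code ` G)"
      using \<open>finite (code ` G)\<close> by simp
    show "pick ` code ` G \<subseteq> G"
      using pick(1) by auto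
    fix f assume "f \<in> G"
    have "dist (\<phi> x f) (\<phi> x (pick (code f))) < \<eta>" if "x \<in> P" for x
    proof (rule dist_triangle_half_l[of _ "code f x"])
      show "dist (\<phi> x f) (code f x) < \<eta> / 2"
        using code(2)[OF that \<open>f \<in> G\<close>] by (simp add: dist_commute)
      show "dist (\<phi> x (pick (code f))) (code f x) < \<eta> / 2"
        using code(2)[OF that pick(1)[OF \<open>f \<in> G\<close>]] pick(2)[OF \<open>f \<in> G\<close>] by (simp add: dist_commute)
    qed
    then show "\<exists>g\<in>pick ` code ` G. \<forall>x\<in>P. dist (\<phi> x f) (\<phi> x g) < \<eta>"
      using \<open>f \<in> G\<close> by blast
  qed
qed

lemma uniform_limit_atE:
  fixes \<Phi> :: "'f \<Rightarrow> 'a::metric_space \<Rightarrow> 'e::metric_space"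
  assumes "uniform_limit G (\<lambda>y f. \<Phi> f y) (\<lambda>f. \<Phi> f x) (at x)" "0 < e"
  obtains s where "0 < s" "\<And>y f. dist y x < s \<Longrightarrow> f \<in> G \<Longrightarrow> dist (\<Phi> f y) (\<Phi> f x) < e"
proof -
  have "\<forall>\<^sub>F y in at x. \<forall>f\<in>G. dist (\<Phi> f y) (\<Phi> f x) < e"
    by (rule uniform_limitD[OF assms])
  then obtain s where "0 < s"
    and s: "\<And>y f. y \<noteq> x \<Longrightarrow> dist y x < s \<Longrightarrow> f \<in> G \<Longrightarrow> dist (\<Phi> f y) (\<Phi> f x) < e"
    unfolding eventually_at by blast
  show ?thesis
  proof (rule that[OF \<open>0 < s\<close>])
    fix y f assume "dist y x < s" "f \<in> G"
    then show "dist (\<Phi> f y) (\<Phi> f x) < e"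
      using s[of y f] \<open>0 < e\<close> by (cases "y = x") auto
  qed
qed

lemma finite_net_equicontinuous:
  fixes \<Phi> :: "'f \<Rightarrow> 'a::metric_space \<Rightarrow> 'e::heine_borel"
  assumes "compact C"
    and equicont: "\<And>x. x \<in> C \<Longrightarrow> uniform_limit G (\<lambda>y f. \<Phi> f y) (\<lambda>f. \<Phi> f x) (at x)"
    and bounded: "\<And>x. x \<in> C \<Longrightarrow> bounded ((\<lambda>f. \<Phi> f x) ` G)"
    and "0 < \<delta>"
  obtains K where "finite K" "K \<subseteq> G" "\<And>f. f \<in> G \<Longrightarrow> \<exists>g\<in>K. \<forall>y\<in>C. dist (\<Phi> f y) (\<Phi> g y) < \<delta>"
proof -
  have "\<exists>s>0. \<forall>y f. dist y x < s \<longrightarrow> f \<in> G \<longrightarrow> dist (\<Phi> f y) (\<Phi> f x) < \<delta> / 3" if "x \<in> C" for x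
    by (rule uniform_limit_atE[OF equicont[OF that], where e = "\<delta> / 3"]) (use \<open>0 < \<delta>\<close> in auto)
  then obtain s where s: "\<And>x. x \<in> C \<Longrightarrow> 0 < s x"
    and s_close: "\<And>x y f. x \<in> C \<Longrightarrow> dist y x < s x \<Longrightarrow> f \<in> G \<Longrightarrow> dist (\<Phi> f y) (\<Phi> f x) < \<delta> / 3"
    by metis
  obtain P where P: "P \<subseteq> C" "finite P" "C \<subseteq> (\<Union>x\<in>P. ball x (s x))"
  proof (rule compactE_image[OF \<open>compact C\<close>, of C "\<lambda>x. ball x (s x)"])
    show "C \<subseteq> (\<Union>x\<in>C. ball x (s x))"
      using s by force
  qed auto
  obtain K where K: "finite K" "K \<subseteq> G"
    and K_net: "\<And>f. f \<in> G \<Longrightarrow> \<exists>g\<in>K. \<forall>x\<in>P. dist (\<Phi> f x) (\<Phi> g x) < \<delta> / 3"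
    by (rule finite_net_pointwise[of P "\<lambda>x f. \<Phi> f x" G "\<delta> / 3", OF P(2) _ _ that])
      (use P(1) bounded \<open>0 < \<delta>\<close> in auto)
  show ?thesis
  proof (rule that[OF K])
    fix f assume "f \<in> G"
    then obtain g where "g \<in> K" and g: "\<forall>x\<in>P. dist (\<Phi> f x) (\<Phi> g x) < \<delta> / 3"
      using K_net by blast
    with K(2) have "g \<in> G" by blast
    have "dist (\<Phi> f y) (\<Phi> g y) < \<delta>" if "y \<in> C" for y
    proof -
      obtain x where "x \<in> P" "dist y x < s x"
        using P(3) \<open>y \<in> C\<close> by (auto simp: dist_commute)
      then have "dist (\<Phi> f y) (\<Phi> f x) < \<delta> / 3" "dist (\<Phi> g y) (\<Phi> g x) < \<delta> / 3"
        "dist (\<Phi> f x) (\<Phi> g x) < \<delta> / 3"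
        using s_close[of x y f] s_close[of x y g] P(1) \<open>f \<in> G\<close> \<open>g \<in> G\<close> g by auto
      moreover have "dist (\<Phi> f y) (\<Phi> g y)
          \<le> dist (\<Phi> f y) (\<Phi> f x) + dist (\<Phi> f x) (\<Phi> g x) + dist (\<Phi> g y) (\<Phi> g x)"
        using dist_triangle[of "\<Phi> f y" "\<Phi> g y" "\<Phi> f x"] dist_triangle[of "\<Phi> f x" "\<Phi> g y" "\<Phi> g x"]
        by (simp add: dist_commute)
      ultimately show ?thesis
        by linarith
    qed
    then show "\<exists>g\<in>K. \<forall>y\<in>C. dist (\<Phi> f y) (\<Phi> g y) < \<delta>"
      using \<open>g \<in> K\<close> by blast
  qed
qed

section \<open>The weighted \<open>L\<^sup>p\<close> norm and averages\<close>

lemma Lp_norm_less_iff: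
  assumes "0 < p" "0 < e"
  shows "Lp_norm \<rho> p M h < ennreal e \<longleftrightarrow> Lp_int \<rho> p M h < ennreal (e powr p)"
proof (cases "Lp_int \<rho> p M h")
  case (real X)
  have "X powr (1 / p) < e \<longleftrightarrow> X < e powr p"
  proof
    assume "X powr (1 / p) < e"
    then have "(X powr (1 / p)) powr p < e powr p"
      using assms real by (intro powr_less_mono2) auto
    then show "X < e powr p"
      using assms real by (simp add: powr_powr)
  next
    assume "X < e powr p"
    then have "X powr (1 / p) < (e powr p) powr (1 / p)"
      using assms real by (intro powr_less_mono2) auto
    then show "X powr (1 / p) < e"
      using assms by (simp add: powr_powr)
  qed
  then show ?thesis
    using assms real by (simp add: Lp_norm_def ennreal_less_iff)
qed (simp add: Lp_norm_def)

lemma Lp_int_bounded_if_SUP_Lp_norm_finite: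
  assumes "(SUP f\<in>F. Lp_norm \<rho> p M f) < \<infinity>" "0 < p"
  obtains A where "0 \<le> A" "\<And>f. f \<in> F \<Longrightarrow> Lp_int \<rho> p M f \<le> ennreal A"
proof
  define c where "c = enn2real (SUP f\<in>F. Lp_norm \<rho> p M f) + 1"
  have "0 < c"
    using enn2real_nonneg[of "SUP f\<in>F. Lp_norm \<rho> p M f"] unfolding c_def by linarith
  have "(SUP f\<in>F. Lp_norm \<rho> p M f) < ennreal c"
    using assms(1) unfolding c_def by (cases "SUP f\<in>F. Lp_norm \<rho> p M f") (auto simp: ennreal_lessI)
  show "0 \<le> c powr p"
    by simp
  fix f assume "f \<in> F"
  then have "Lp_norm \<rho> p M f < ennreal c"
    using \<open>(SUP f\<in>F. Lp_norm \<rho> p M f) < ennreal c\<close> by (rule le_less_trans[OF SUP_upper])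
  then show "Lp_int \<rho> p M f \<le> ennreal (c powr p)"
    using assms(2) \<open>0 < c\<close> by (simp add: Lp_norm_less_iff)
qed

lemma eventually_Lp_int_less:
  assumes "((\<lambda>t. SUP f\<in>F. Lp_norm \<rho> p M (h t f)) \<longlongrightarrow> 0) L" "0 < p" "0 < \<eta>"
  shows "\<forall>\<^sub>F t in L. \<forall>f\<in>F. Lp_int \<rho> p M (h t f) < ennreal \<eta>"
proof -
  have "\<forall>\<^sub>F t in L. (SUP f\<in>F. Lp_norm \<rho> p M (h t f)) < ennreal (\<eta> powr (1 / p))"
    using assms by (intro order_tendstoD(2)[OF assms(1)]) auto
  then show ?thesis
  proof eventually_elim
    case (elim t)
    have "Lp_norm \<rho> p M (h t f) < ennreal (\<eta> powr (1 / p))" if "f \<in> F" for f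
      using le_less_trans[OF SUP_upper[OF that] elim] .
    then show ?case
      using assms(2,3) by (simp add: Lp_norm_less_iff powr_powr)
  qed
qed

locale metric_measure_space =
  fixes M :: "'a::metric_space measure"
  assumes sets_M: "sets M = sets borel"
    and emeasure_open_pos: "\<And>U. open U \<Longrightarrow> U \<noteq> {} \<Longrightarrow> 0 < emeasure M U"
    and emeasure_bounded_finite: "\<And>S. bounded S \<Longrightarrow> emeasure M S < \<infinity>"
    and measure_ball_symdiff_tendsto: "\<And>x r. 0 < r \<Longrightarrow>
      ((\<lambda>y. measure M ((ball x r - ball y r) \<union> (ball y r - ball x r))) \<longlongrightarrow> 0) (at x)"
begin

lemma borel_measurable_M: "borel_measurable M = borel_measurable borel"
  by (rule measurable_cong_sets[OF sets_M refl])

lemma ball_in_sets_M [measurable]: "ball x r \<in> sets M"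
  using sets_M by simp

lemma fmeasurable_bounded: "S \<in> sets M \<Longrightarrow> bounded S \<Longrightarrow> S \<in> fmeasurable M"
  using emeasure_bounded_finite by (auto intro: fmeasurableI)

lemma measure_ball_pos: "0 < r \<Longrightarrow> 0 < measure M (ball x r)"
  using emeasure_open_pos[of "ball x r"] emeasure_bounded_finite[of "ball x r"]
  by (auto simp: measure_def enn2real_positive_iff)

lemma tendsto_measure_ball:
  assumes "0 < r"
  shows "((\<lambda>y. measure M (ball y r)) \<longlongrightarrow> measure M (ball x r)) (at x)"
proof -
  let ?D = "\<lambda>y. (ball x r - ball y r) \<union> (ball y r - ball x r)"
  have le: "measure M (ball u r) \<le> measure M (ball v r) + measure M (?D y)"
    if "u = x \<and> v = y \<or> u = y \<and> v = x" for u v y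
  proof -
    have "measure M (ball u r) \<le> measure M (ball v r \<union> ?D y)"
      using that by (intro measure_mono_fmeasurable fmeasurable_bounded) auto
    also have "\<dots> \<le> measure M (ball v r) + measure M (?D y)"
      by (rule measure_Un_le) auto
    finally show ?thesis .
  qed
  have "((\<lambda>y. measure M (ball y r) - measure M (ball x r)) \<longlongrightarrow> 0) (at x)"
  proof (rule Lim_null_comparison[OF always_eventually measure_ball_symdiff_tendsto[OF assms]])
    show "\<forall>y. norm (measure M (ball y r) - measure M (ball x r)) \<le> measure M (?D y)"
    proof
      fix y
      show "norm (measure M (ball y r) - measure M (ball x r)) \<le> measure M (?D y)"
        using le[of y x y] le[of x y y] by (auto simp: abs_le_iff)
    qed
  qed
  then show ?thesis
    by (simp add: LIM_zero_iff)
qed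

end

locale dominating_norm_family = metric_measure_space M for M :: "'a::metric_space measure" +
  fixes \<rho> :: "'a \<Rightarrow> complex^'n \<Rightarrow> real" and p :: real and a :: "'a \<Rightarrow> real"
  assumes p_gt_1: "1 < p"
    and is_cnorm_rho: "\<And>x. is_cnorm (\<rho> x)"
    and rho_measurable: "\<And>f. f \<in> borel_measurable M \<Longrightarrow> (\<lambda>x. \<rho> x (f x)) \<in> borel_measurable M"
    and weight_nonneg: "\<And>x. 0 \<le> a x"
    and norm_le_weight_rho: "\<And>x v. norm v \<le> a x * \<rho> x v"
    and weight_loc_integrable: "loc_integrable M (\<lambda>x. a x powr (p / (p - 1)))"
begin

definition p' :: real where "p' = p / (p - 1)"

lemma conjugate_exponent: "1 / p + 1 / p' = 1"
  using p_gt_1 by (simp add: p'_def field_simps)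

lemma rho_nonneg: "0 \<le> \<rho> x v"
  using is_cnorm_rho[of x] by (simp add: is_cnorm_def)

lemma rho_triangle: "\<rho> x (v + w) \<le> \<rho> x v + \<rho> x w"
  using is_cnorm_rho[of x] by (simp add: is_cnorm_def)

lemma rho_minus: "\<rho> x (- v) = \<rho> x v"
proof -
  have "\<rho> x ((- 1) *s v) = cmod (- 1) * \<rho> x v"
    using is_cnorm_rho[of x] unfolding is_cnorm_def by blast
  moreover have "(- 1) *s v = - v"
    by (simp add: vec_eq_iff)
  ultimately show ?thesis
    by simp
qed

lemma rho_zero [simp]: "\<rho> x 0 = 0"
  using is_cnorm_rho[of x] by (simp add: is_cnorm_def)

lemma rho_minus_commute: "\<rho> x (v - w) = \<rho> x (w - v)"
  using rho_minus[of x "v - w"] by simp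

lemma rho_diff_le: "\<rho> x (v - w) \<le> \<rho> x v + \<rho> x w"
  using rho_triangle[of x v "- w"] by (simp add: rho_minus)

lemmas [measurable] = rho_measurable

definition weight_integral :: "'a set \<Rightarrow> ennreal" where
  "weight_integral S = (\<integral>\<^sup>+x\<in>S. ennreal (a x powr p') \<partial>M)"

lemma weight_powr_measurable [measurable]: "(\<lambda>x. a x powr p') \<in> borel_measurable M"
  using weight_loc_integrable by (simp add: loc_integrable_def p'_def)

lemma weight_integral_mono: "S \<subseteq> T \<Longrightarrow> weight_integral S \<le> weight_integral T"
  unfolding weight_integral_def by (rule nn_set_integral_set_mono)

lemma weight_integral_bounded_finite:
  assumes "bounded S"
  shows "weight_integral S < \<infinity>"
proof -
  obtain r where "S \<subseteq> ball undefined r"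
    using bounded_subset_ballD[OF assms] by blast
  moreover have "weight_integral (ball undefined r) < \<infinity>"
    using loc_integrable_nn_integral_ball_finite[OF weight_loc_integrable]
    by (simp add: weight_integral_def p'_def)
  ultimately show ?thesis
    using weight_integral_mono le_less_trans by blast
qed

lemma nn_integral_norm_le:
  assumes [measurable]: "h \<in> borel_measurable M" "S \<in> sets M"
    and "0 < \<epsilon>" "weight_integral S \<le> ennreal w" "Lp_int \<rho> p M h \<le> ennreal A" "0 \<le> w" "0 \<le> A"
  shows "(\<integral>\<^sup>+x\<in>S. ennreal (norm (h x)) \<partial>M) \<le> ennreal (\<epsilon> powr (1 - p') * w + \<epsilon> * A)"
proof -
  have "ennreal (norm (h x)) * indicator S x \<le> ennreal (\<epsilon> powr (1 - p')) * (ennreal (a x powr p') * indicator S x)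
      + ennreal \<epsilon> * ennreal (\<rho> x (h x) powr p)" for x
  proof (cases "x \<in> S")
    case True
    have "norm (h x) \<le> a x * \<rho> x (h x)"
      by (rule norm_le_weight_rho)
    also have "\<dots> \<le> \<epsilon> powr (1 - p') * a x powr p' + \<epsilon> * \<rho> x (h x) powr p"
      using Youngs_inequality_weighted[OF p_gt_1 conjugate_exponent weight_nonneg rho_nonneg \<open>0 < \<epsilon>\<close>] .
    finally have "ennreal (norm (h x)) \<le> ennreal (\<epsilon> powr (1 - p') * a x powr p' + \<epsilon> * \<rho> x (h x) powr p)"
      by (rule ennreal_leI)
    also have "\<dots> = ennreal (\<epsilon> powr (1 - p')) * ennreal (a x powr p') + ennreal \<epsilon> * ennreal (\<rho> x (h x) powr p)"
      using \<open>0 < \<epsilon>\<close> by (simp add: ennreal_plus ennreal_mult)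
    finally show ?thesis
      using True by simp
  qed simp
  then have "(\<integral>\<^sup>+x\<in>S. ennreal (norm (h x)) \<partial>M) \<le> (\<integral>\<^sup>+x. ennreal (\<epsilon> powr (1 - p')) *
      (ennreal (a x powr p') * indicator S x) + ennreal \<epsilon> * ennreal (\<rho> x (h x) powr p) \<partial>M)"
    by (rule nn_integral_mono)
  also have "\<dots> = ennreal (\<epsilon> powr (1 - p')) * weight_integral S + ennreal \<epsilon> * Lp_int \<rho> p M h"
    unfolding weight_integral_def Lp_int_def by (simp add: nn_integral_add nn_integral_cmult)
  also have "\<dots> \<le> ennreal (\<epsilon> powr (1 - p')) * ennreal w + ennreal \<epsilon> * ennreal A"
    using assms by (intro add_mono mult_left_mono) auto
  also have "\<dots> = ennreal (\<epsilon> powr (1 - p') * w + \<epsilon> * A)"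
    using assms by (simp add: ennreal_plus ennreal_mult)
  finally show ?thesis .
qed

lemma set_integrable_Lp:
  assumes [measurable]: "h \<in> borel_measurable M" "S \<in> sets M"
    and "Lp_int \<rho> p M h < \<infinity>" "bounded S"
  shows "set_integrable M S h"
proof -
  have "(\<integral>\<^sup>+x\<in>S. ennreal (norm (h x)) \<partial>M)
      \<le> ennreal (1 powr (1 - p') * enn2real (weight_integral S) + 1 * enn2real (Lp_int \<rho> p M h))"
    using weight_integral_bounded_finite[OF \<open>bounded S\<close>] \<open>Lp_int \<rho> p M h < \<infinity>\<close>
    by (intro nn_integral_norm_le) auto
  also have "\<dots> < \<infinity>"
    by simp
  also have "(\<integral>\<^sup>+x\<in>S. ennreal (norm (h x)) \<partial>M) = (\<integral>\<^sup>+x. ennreal (norm (indicator S x *\<^sub>R h x)) \<partial>M)"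
    by (intro nn_integral_cong) (simp split: split_indicator)
  finally show ?thesis
    unfolding set_integrable_def integrable_iff_bounded by simp
qed

lemma eventually_weight_integral_symdiff_less:
  assumes "0 < r" "0 < e"
  shows "\<forall>\<^sub>F y in at x. weight_integral ((ball x r - ball y r) \<union> (ball y r - ball x r)) < ennreal e"
proof -
  define B where "B = ball x (r + 1)"
  have meas: "(\<lambda>z. indicator B z * a z powr p') \<in> borel_measurable M"
    unfolding B_def by measurable
  have "(\<integral>\<^sup>+z. ennreal (indicator B z * a z powr p') \<partial>M) = weight_integral B"
    unfolding weight_integral_def by (intro nn_integral_cong) (simp split: split_indicator)
  then have fin: "(\<integral>\<^sup>+z. ennreal (indicator B z * a z powr p') \<partial>M) < \<infinity>"
    using weight_integral_bounded_finite[of B] by (simp add: B_def)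
  obtain \<delta> where "0 < \<delta>" and \<delta>: "\<And>D. D \<in> sets M \<Longrightarrow> emeasure M D < ennreal \<delta> \<Longrightarrow>
      (\<integral>\<^sup>+z\<in>D. ennreal (indicator B z * a z powr p') \<partial>M) < ennreal e"
    by (rule nn_integral_absolutely_continuous[OF meas fin \<open>0 < e\<close> that])
  have "\<forall>\<^sub>F y in at x. dist y x < 1"
    using tendstoD[OF tendsto_ident_at, of 1 x UNIV] by simp
  with order_tendstoD(2)[OF measure_ball_symdiff_tendsto[OF \<open>0 < r\<close>] \<open>0 < \<delta>\<close>]
  show ?thesis
  proof eventually_elim
    case (elim y)
    let ?D = "(ball x r - ball y r) \<union> (ball y r - ball x r)"
    have "ball y r \<subseteq> B"
    proof
      fix z assume "z \<in> ball y r"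
      then show "z \<in> B"
        using dist_triangle[of x z y] elim by (simp add: B_def dist_commute)
    qed
    then have "?D \<subseteq> B"
      by (auto simp: B_def)
    then have "?D \<in> fmeasurable M"
      by (intro fmeasurable_bounded) (auto simp: B_def intro: bounded_subset)
    then have "emeasure M ?D < ennreal \<delta>"
      using elim \<open>0 < \<delta>\<close> by (simp add: emeasure_eq_ennreal_measure fmeasurableD2 ennreal_lessI)
    then have "(\<integral>\<^sup>+z\<in>?D. ennreal (indicator B z * a z powr p') \<partial>M) < ennreal e"
      by (intro \<delta>) measurable
    also have "(\<integral>\<^sup>+z\<in>?D. ennreal (indicator B z * a z powr p') \<partial>M) = weight_integral ?D"
      unfolding weight_integral_def using \<open>?D \<subseteq> B\<close> by (intro nn_integral_cong) (auto split: split_indicator)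
    finally show ?case .
  qed
qed

lemma uniform_limit_set_integral_ball:
  assumes G: "\<And>f. f \<in> G \<Longrightarrow> f \<in> borel_measurable M \<and> Lp_int \<rho> p M f \<le> ennreal A"
    and "0 \<le> A" "0 < r"
  shows "uniform_limit G (\<lambda>y f. LINT z:ball y r|M. f z) (\<lambda>f. LINT z:ball x r|M. f z) (at x)"
proof (rule uniform_limitI)
  fix \<eta> :: real assume "0 < \<eta>"
  \<comment> \<open>Young's inequality with weight \<open>\<epsilon>\<close> trades the weight mass of the symmetric difference
    against the uniform \<open>L\<^sup>p\<close> bound\<close>
  define \<epsilon> where "\<epsilon> = \<eta> / (3 * (A + 1))"
  define w where "w = \<eta> / 3 * \<epsilon> powr (p' - 1)"
  have "0 < \<epsilon>" "0 < w"
    using \<open>0 < \<eta>\<close> \<open>0 \<le> A\<close> by (simp_all add: \<epsilon>_def w_def)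
  have "\<epsilon> * A < \<eta> / 3"
    using \<open>0 < \<eta>\<close> \<open>0 \<le> A\<close> by (simp add: \<epsilon>_def field_simps)
  have "\<epsilon> powr (1 - p') * w = \<eta> / 3 * (\<epsilon> powr (1 - p') * \<epsilon> powr (p' - 1))"
    by (simp add: w_def mult_ac)
  also have "\<dots> = \<eta> / 3"
    using \<open>0 < \<epsilon>\<close> by (simp flip: powr_add)
  finally have \<epsilon>_w: "\<epsilon> powr (1 - p') * w = \<eta> / 3" .
  show "\<forall>\<^sub>F y in at x. \<forall>f\<in>G. dist (LINT z:ball y r|M. f z) (LINT z:ball x r|M. f z) < \<eta>"
    using eventually_weight_integral_symdiff_less[OF \<open>0 < r\<close> \<open>0 < w\<close>]
  proof eventually_elim
    case (elim y)
    let ?D = "(ball x r - ball y r) \<union> (ball y r - ball x r)"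
    have [measurable]: "?D \<in> sets M"
      by measurable
    show ?case
    proof
      fix f assume "f \<in> G"
      then have f [measurable]: "f \<in> borel_measurable M" and fA: "Lp_int \<rho> p M f \<le> ennreal A"
        using G by auto
      have int: "set_integrable M (ball u r) f" for u
        using fA by (intro set_integrable_Lp) (auto simp: le_less_trans)
      have "ennreal (dist (LINT z:ball y r|M. f z) (LINT z:ball x r|M. f z))
          \<le> (\<integral>\<^sup>+z\<in>?D. ennreal (norm (f z)) \<partial>M)"
        using norm_set_integral_diff_le[OF int int, of x y] by (simp add: dist_norm norm_minus_commute)
      also have "\<dots> \<le> ennreal (\<epsilon> powr (1 - p') * w + \<epsilon> * A)"
        using elim \<open>0 < \<epsilon>\<close> \<open>0 < w\<close> \<open>0 \<le> A\<close> fA by (intro nn_integral_norm_le) auto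
      finally have "dist (LINT z:ball y r|M. f z) (LINT z:ball x r|M. f z) \<le> \<epsilon> powr (1 - p') * w + \<epsilon> * A"
        using \<open>0 < \<epsilon>\<close> \<open>0 < w\<close> \<open>0 \<le> A\<close> by (subst (asm) ennreal_le_iff) auto
      then show "dist (LINT z:ball y r|M. f z) (LINT z:ball x r|M. f z) < \<eta>"
        using \<epsilon>_w \<open>\<epsilon> * A < \<eta> / 3\<close> \<open>0 < \<eta>\<close> by linarith
    qed
  qed
qed

lemma bounded_set_integral_ball:
  assumes G: "\<And>f. f \<in> G \<Longrightarrow> f \<in> borel_measurable M \<and> Lp_int \<rho> p M f \<le> ennreal A" and "0 \<le> A"
  shows "bounded ((\<lambda>f. LINT z:ball x r|M. f z) ` G)"
proof -
  let ?w = "enn2real (weight_integral (ball x r))"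
  have "norm (LINT z:ball x r|M. f z) \<le> ?w + A" if "f \<in> G" for f
  proof -
    from that have f [measurable]: "f \<in> borel_measurable M" and fA: "Lp_int \<rho> p M f \<le> ennreal A"
      using G by auto
    have "ennreal (norm (LINT z:ball x r|M. f z)) \<le> (\<integral>\<^sup>+z\<in>ball x r. ennreal (norm (f z)) \<partial>M)"
      using fA by (intro norm_set_integral_le set_integrable_Lp) (auto simp: le_less_trans)
    also have "\<dots> \<le> ennreal (1 powr (1 - p') * ?w + 1 * A)"
      using weight_integral_bounded_finite[of "ball x r"] fA \<open>0 \<le> A\<close>
      by (intro nn_integral_norm_le) auto
    finally have "norm (LINT z:ball x r|M. f z) \<le> 1 powr (1 - p') * ?w + 1 * A"
      using \<open>0 \<le> A\<close> enn2real_nonneg[of "weight_integral (ball x r)"] by (subst (asm) ennreal_le_iff) auto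
    then show ?thesis
      by simp
  qed
  then show ?thesis
    unfolding bounded_iff by blast
qed

lemma uniform_limit_avg_op:
  assumes G: "\<And>f. f \<in> G \<Longrightarrow> f \<in> borel_measurable M \<and> Lp_int \<rho> p M f \<le> ennreal A"
    and "0 \<le> A" "0 < r"
  shows "uniform_limit G (\<lambda>y f. avg_op M r f y) (\<lambda>f. avg_op M r f x) (at x)"
proof -
  have "((\<lambda>y. 1 / measure M (ball y r)) \<longlongrightarrow> 1 / measure M (ball x r)) (at x)"
    using measure_ball_pos[OF \<open>0 < r\<close>, of x] by (intro tendsto_divide tendsto_const tendsto_measure_ball \<open>0 < r\<close>) auto
  then have "uniform_limit G (\<lambda>y f. 1 / measure M (ball y r)) (\<lambda>f. 1 / measure M (ball x r)) (at x)"
    unfolding uniform_limit_iff by (auto dest: tendstoD elim: eventually_mono)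
  moreover have "bounded ((\<lambda>f. 1 / measure M (ball x r)) ` G)"
  proof (rule bounded_subset)
    show "bounded {1 / measure M (ball x r)}"
      by simp
  qed auto
  ultimately have "uniform_limit G (\<lambda>y f. (1 / measure M (ball y r)) *\<^sub>R (LINT z:ball y r|M. f z))
      (\<lambda>f. (1 / measure M (ball x r)) *\<^sub>R (LINT z:ball x r|M. f z)) (at x)"
    using uniform_limit_set_integral_ball[OF G \<open>0 \<le> A\<close> \<open>0 < r\<close>] bounded_set_integral_ball[OF G \<open>0 \<le> A\<close>]
    by (intro bounded_bilinear_bounded_uniform_limit_intros(3))
  then show ?thesis
    by (simp add: avg_op_def)
qed

lemma bounded_avg_op:
  assumes "\<And>f. f \<in> G \<Longrightarrow> f \<in> borel_measurable M \<and> Lp_int \<rho> p M f \<le> ennreal A" and "0 \<le> A"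
  shows "bounded ((\<lambda>f. avg_op M r f x) ` G)"
  using bounded_scaling[OF bounded_set_integral_ball[OF assms], where c = "1 / measure M (ball x r)"]
  by (simp add: avg_op_def image_image)

lemma avg_op_measurable:
  assumes "f \<in> borel_measurable M" "Lp_int \<rho> p M f < \<infinity>" "0 < r"
  shows "avg_op M r f \<in> borel_measurable M"
proof -
  have "isCont (avg_op M r f) x" for x
    using uniform_limit_avg_op[of "{f}" "enn2real (Lp_int \<rho> p M f)" r x] assms
    by (simp add: isCont_def)
  then show ?thesis
    unfolding borel_measurable_M by (intro borel_measurable_continuous_onI continuous_at_imp_continuous_on) auto
qed

end

section \<open>The Kolmogorov--Riesz theorem\<close>

locale comparable_norm_family = dominating_norm_family M \<rho> p a
  for M :: "'a::metric_space measure" and \<rho> :: "'a \<Rightarrow> complex^'n \<Rightarrow> real" and p a +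
  fixes b :: "'a \<Rightarrow> real"
  assumes rho_le_weight_norm: "\<And>x v. \<rho> x v \<le> b x * norm v"
    and upper_weight_nonneg: "\<And>x. 0 \<le> b x"
    and upper_weight_loc_integrable: "loc_integrable M (\<lambda>x. b x powr p)"
begin

lemma rho_diff_powr_le:
  assumes "norm (u - v) \<le> \<delta>" "0 \<le> \<delta>"
  shows "\<rho> x (f - g) powr p \<le> 3 powr p * (\<rho> x (u - f) powr p + \<delta> powr p * b x powr p + \<rho> x (v - g) powr p)"
proof -
  have "\<rho> x (f - g) \<le> \<rho> x (f - v) + \<rho> x (v - g)"
    using rho_triangle[of x "f - v" "v - g"] by simp
  moreover have "\<rho> x (f - v) \<le> \<rho> x (f - u) + \<rho> x (u - v)"
    using rho_triangle[of x "f - u" "u - v"] by simp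
  moreover have "\<rho> x (u - v) \<le> b x * \<delta>"
    using rho_le_weight_norm[of x "u - v"] mult_left_mono[OF assms(1) upper_weight_nonneg[of x]] by linarith
  ultimately have "\<rho> x (f - g) powr p \<le> (\<rho> x (u - f) + b x * \<delta> + \<rho> x (v - g)) powr p"
    using p_gt_1 rho_nonneg rho_minus_commute[of x f u] by (intro powr_mono2) auto
  also have "\<dots> \<le> 3 powr p * (\<rho> x (u - f) powr p + (b x * \<delta>) powr p + \<rho> x (v - g) powr p)"
    using p_gt_1 \<open>0 \<le> \<delta>\<close> rho_nonneg upper_weight_nonneg by (intro powr_add3_le) auto
  also have "(b x * \<delta>) powr p = \<delta> powr p * b x powr p"
    using \<open>0 \<le> \<delta>\<close> upper_weight_nonneg by (simp add: powr_mult)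
  finally show ?thesis .
qed

lemma Lp_int_diff_le:
  fixes f g u v :: "'a \<Rightarrow> complex^'n"
  assumes [measurable]: "f \<in> borel_measurable M" "g \<in> borel_measurable M"
    "u \<in> borel_measurable M" "v \<in> borel_measurable M" "B \<in> sets M"
    and close: "\<And>x. x \<in> B \<Longrightarrow> norm (u x - v x) \<le> \<delta>" and "0 \<le> \<delta>"
  shows "Lp_int \<rho> p M (\<lambda>x. f x - g x) \<le> ennreal (3 powr p) *
    (Lp_int \<rho> p M (\<lambda>x. indicator (UNIV - B) x *\<^sub>R f x) + Lp_int \<rho> p M (\<lambda>x. indicator (UNIV - B) x *\<^sub>R g x)
     + Lp_int \<rho> p M (\<lambda>x. u x - f x) + Lp_int \<rho> p M (\<lambda>x. v x - g x)
     + ennreal (\<delta> powr p) * (\<integral>\<^sup>+x\<in>B. ennreal (b x powr p) \<partial>M))"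
proof -
  have "0 < p"
    using p_gt_1 by simp
  define tail where "tail h x = \<rho> x (indicator (UNIV - B) x *\<^sub>R h x) powr p" for h x
  define err where "err h k x = \<rho> x (h x - k x) powr p" for h k x
  define near where "near x = \<delta> powr p * (b x powr p * indicator B x)" for x
  have pointwise: "err f g x \<le> 3 powr p * (tail f x + tail g x + err u f x + err v g x + near x)" for x
  proof (cases "x \<in> B")
    case True
    then show ?thesis
      using rho_diff_powr_le[OF close[OF True] \<open>0 \<le> \<delta>\<close>, of x "f x" "g x"] \<open>0 < p\<close>
      by (simp add: tail_def err_def near_def algebra_simps)
  next
    case False
    have "\<rho> x (f x - g x) powr p \<le> (\<rho> x (f x) + \<rho> x (g x) + 0) powr p"
      using \<open>0 < p\<close> rho_nonneg rho_diff_le by (intro powr_mono2) auto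
    also have "\<dots> \<le> 3 powr p * (\<rho> x (f x) powr p + \<rho> x (g x) powr p + 0 powr p)"
      using \<open>0 < p\<close> rho_nonneg by (intro powr_add3_le) auto
    also have "\<dots> \<le> 3 powr p * (tail f x + tail g x + err u f x + err v g x + near x)"
      using False by (intro mult_left_mono) (auto simp: tail_def err_def near_def)
    finally show ?thesis
      by (simp add: err_def)
  qed
  have [measurable]: "(\<lambda>x. ennreal (tail h x)) \<in> borel_measurable M" if [measurable]: "h \<in> borel_measurable M" for h
    unfolding tail_def by measurable
  have [measurable]: "(\<lambda>x. ennreal (err h k x)) \<in> borel_measurable M"
    if [measurable]: "h \<in> borel_measurable M" "k \<in> borel_measurable M" for h k
    unfolding err_def by measurable
  have [measurable]: "(\<lambda>x. ennreal (b x powr p)) \<in> borel_measurable M"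
    using upper_weight_loc_integrable by (simp add: loc_integrable_def)
  have "Lp_int \<rho> p M (\<lambda>x. f x - g x) \<le> (\<integral>\<^sup>+x. ennreal (3 powr p) * (ennreal (tail f x) + ennreal (tail g x)
      + ennreal (err u f x) + ennreal (err v g x) + ennreal (\<delta> powr p) * (ennreal (b x powr p) * indicator B x)) \<partial>M)"
    unfolding Lp_int_def
  proof (rule nn_integral_mono)
    fix x
    have "ennreal (\<rho> x (f x - g x) powr p) \<le> ennreal (3 powr p * (tail f x + tail g x + err u f x + err v g x + near x))"
      using pointwise[of x] by (intro ennreal_leI) (simp add: err_def)
    also have "\<dots> = ennreal (3 powr p) * (ennreal (tail f x) + ennreal (tail g x)
        + ennreal (err u f x) + ennreal (err v g x) + ennreal (\<delta> powr p) * (ennreal (b x powr p) * indicator B x))"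
      by (simp add: tail_def err_def near_def ennreal_plus ennreal_mult ennreal_mult' split: split_indicator)
    finally show "ennreal (\<rho> x (f x - g x) powr p) \<le> \<dots>" .
  qed
  also have "\<dots> = ennreal (3 powr p) *
    (Lp_int \<rho> p M (\<lambda>x. indicator (UNIV - B) x *\<^sub>R f x) + Lp_int \<rho> p M (\<lambda>x. indicator (UNIV - B) x *\<^sub>R g x)
     + Lp_int \<rho> p M (\<lambda>x. u x - f x) + Lp_int \<rho> p M (\<lambda>x. v x - g x)
     + ennreal (\<delta> powr p) * (\<integral>\<^sup>+x\<in>B. ennreal (b x powr p) \<partial>M))"
    by (simp add: nn_integral_add nn_integral_cmult Lp_int_def tail_def err_def)
  finally show ?thesis .
qed

lemma finite_Lp_net:
  assumes G: "\<And>f. f \<in> G \<Longrightarrow> f \<in> borel_measurable M \<and> Lp_int \<rho> p M f \<le> ennreal A" and "0 \<le> A"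
    and "0 < r" "compact (cball x0 R)" "0 < \<eta>"
    and tail: "\<And>f. f \<in> G \<Longrightarrow> Lp_int \<rho> p M (\<lambda>x. indicator (UNIV - ball x0 R) x *\<^sub>R f x) \<le> ennreal \<eta>"
    and smooth: "\<And>f. f \<in> G \<Longrightarrow> Lp_int \<rho> p M (\<lambda>x. avg_op M r f x - f x) \<le> ennreal \<eta>"
  obtains K where "finite K" "K \<subseteq> G"
    "\<And>f. f \<in> G \<Longrightarrow> \<exists>g\<in>K. Lp_int \<rho> p M (\<lambda>x. f x - g x) \<le> ennreal (5 * 3 powr p * \<eta>)"
proof -
  have "0 < p"
    using p_gt_1 by simp
  obtain c where c: "(\<integral>\<^sup>+x\<in>ball x0 R. ennreal (b x powr p) \<partial>M) = ennreal c" "0 \<le> c"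
    using loc_integrable_nn_integral_ball_finite[OF upper_weight_loc_integrable] by (auto simp: less_top_ennreal)
  define \<delta> where "\<delta> = (\<eta> / (c + 1)) powr (1 / p)"
  have "0 < \<delta>"
    using \<open>0 < \<eta>\<close> \<open>0 \<le> c\<close> by (simp add: \<delta>_def)
  have "\<delta> powr p * c = \<eta> * (c / (c + 1))"
    using \<open>0 < \<eta>\<close> \<open>0 \<le> c\<close> \<open>0 < p\<close> by (simp add: \<delta>_def powr_powr)
  also have "\<dots> \<le> \<eta>"
    using \<open>0 < \<eta>\<close> \<open>0 \<le> c\<close> by (intro mult_left_le) auto
  finally have \<delta>_c: "\<delta> powr p * c \<le> \<eta>" .
  obtain K where "finite K" "K \<subseteq> G" and K_net:
    "\<And>f. f \<in> G \<Longrightarrow> \<exists>g\<in>K. \<forall>y\<in>cball x0 R. dist (avg_op M r f y) (avg_op M r g y) < \<delta>"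
    by (rule finite_net_equicontinuous[where \<Phi> = "avg_op M r", OF \<open>compact (cball x0 R)\<close>
          uniform_limit_avg_op[OF G \<open>0 \<le> A\<close> \<open>0 < r\<close>] bounded_avg_op[OF G \<open>0 \<le> A\<close>] \<open>0 < \<delta>\<close> that])
  show ?thesis
  proof (rule that[OF \<open>finite K\<close> \<open>K \<subseteq> G\<close>])
    fix f assume "f \<in> G"
    then obtain g where "g \<in> K" and g: "\<forall>y\<in>cball x0 R. dist (avg_op M r f y) (avg_op M r g y) < \<delta>"
      using K_net by blast
    have "g \<in> G"
      using \<open>g \<in> K\<close> \<open>K \<subseteq> G\<close> by blast
    have [measurable]: "h \<in> borel_measurable M" "avg_op M r h \<in> borel_measurable M" if "h \<in> G" for h
      using G[OF that] \<open>0 < r\<close> by (auto intro: avg_op_measurable simp: le_less_trans)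
    have "Lp_int \<rho> p M (\<lambda>x. f x - g x) \<le> ennreal (3 powr p) *
      (Lp_int \<rho> p M (\<lambda>x. indicator (UNIV - ball x0 R) x *\<^sub>R f x) + Lp_int \<rho> p M (\<lambda>x. indicator (UNIV - ball x0 R) x *\<^sub>R g x)
       + Lp_int \<rho> p M (\<lambda>x. avg_op M r f x - f x) + Lp_int \<rho> p M (\<lambda>x. avg_op M r g x - g x)
       + ennreal (\<delta> powr p) * (\<integral>\<^sup>+x\<in>ball x0 R. ennreal (b x powr p) \<partial>M))"
      using g \<open>f \<in> G\<close> \<open>g \<in> G\<close> \<open>0 < \<delta>\<close>
      by (intro Lp_int_diff_le) (auto simp: dist_norm less_imp_le)
    also have "\<dots> \<le> ennreal (3 powr p) * (ennreal \<eta> + ennreal \<eta> + ennreal \<eta> + ennreal \<eta> + ennreal (\<delta> powr p * c))"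
      using tail smooth \<open>f \<in> G\<close> \<open>g \<in> G\<close> c \<open>0 < \<delta>\<close> by (intro mult_left_mono add_mono) (auto simp: ennreal_mult)
    also have "\<dots> \<le> ennreal (3 powr p) * (ennreal \<eta> + ennreal \<eta> + ennreal \<eta> + ennreal \<eta> + ennreal \<eta>)"
      using \<delta>_c by (intro mult_left_mono add_mono ennreal_leI) auto
    also have "\<dots> = ennreal (5 * 3 powr p * \<eta>)"
      using \<open>0 < \<eta>\<close> by (simp flip: ennreal_plus ennreal_mult)
    finally show "\<exists>g\<in>K. Lp_int \<rho> p M (\<lambda>x. f x - g x) \<le> ennreal (5 * 3 powr p * \<eta>)"
      using \<open>g \<in> K\<close> by blast
  qed
qed

theorem Kolmogorov_Riesz:
  assumes proper: "\<And>S::'a set. closed S \<Longrightarrow> bounded S \<Longrightarrow> compact S"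
    and F_sub: "F \<subseteq> Lp_space \<rho> p M"
    and cond_a: "(SUP f\<in>F. Lp_norm \<rho> p M f) < \<infinity>"
    and cond_b: "\<exists>x0. ((\<lambda>R. SUP f\<in>F. Lp_norm \<rho> p M (\<lambda>x. indicator (UNIV - ball x0 R) x *\<^sub>R f x))
                        \<longlongrightarrow> 0) at_top"
    and cond_c: "((\<lambda>r. SUP f\<in>F. Lp_norm \<rho> p M (\<lambda>x. avg_op M r f x - f x)) \<longlongrightarrow> 0) (at_right 0)"
  shows "Lp_totally_bounded \<rho> p M F"
  unfolding Lp_totally_bounded_def
proof (intro allI impI)
  fix \<epsilon> :: real assume "0 < \<epsilon>"
  have "0 < p"
    using p_gt_1 by simp
  obtain A where "0 \<le> A" and A: "\<And>f. f \<in> F \<Longrightarrow> Lp_int \<rho> p M f \<le> ennreal A"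
    using Lp_int_bounded_if_SUP_Lp_norm_finite[OF cond_a \<open>0 < p\<close>] by blast
  have F: "f \<in> borel_measurable M \<and> Lp_int \<rho> p M f \<le> ennreal A" if "f \<in> F" for f
    using F_sub A that by (auto simp: Lp_space_def)
  define \<eta> where "\<eta> = \<epsilon> powr p / (5 * 3 powr p + 1)"
  have "0 < 5 * 3 powr p + 1"
    using powr_gt_zero[of 3 p] by linarith
  then have "0 < \<eta>" "5 * 3 powr p * \<eta> = \<epsilon> powr p - \<eta>"
    using \<open>0 < \<epsilon>\<close> by (simp_all add: \<eta>_def divide_simps) (simp add: algebra_simps)
  then have "5 * 3 powr p * \<eta> < \<epsilon> powr p"
    by linarith
  obtain x0 where x0: "((\<lambda>R. SUP f\<in>F. Lp_norm \<rho> p M (\<lambda>x. indicator (UNIV - ball x0 R) x *\<^sub>R f x)) \<longlongrightarrow> 0) at_top"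
    using cond_b by blast
  obtain R where tail: "\<And>f. f \<in> F \<Longrightarrow> Lp_int \<rho> p M (\<lambda>x. indicator (UNIV - ball x0 R) x *\<^sub>R f x) < ennreal \<eta>"
    using eventually_Lp_int_less[OF x0 \<open>0 < p\<close> \<open>0 < \<eta>\<close>] by (auto simp: eventually_at_top_linorder)
  have "\<forall>\<^sub>F r in at_right 0. 0 < r \<and> (\<forall>f\<in>F. Lp_int \<rho> p M (\<lambda>x. avg_op M r f x - f x) < ennreal \<eta>)"
    using eventually_at_right_less eventually_Lp_int_less[OF cond_c \<open>0 < p\<close> \<open>0 < \<eta>\<close>] by (rule eventually_conj)
  then have "\<exists>r. 0 < r \<and> (\<forall>f\<in>F. Lp_int \<rho> p M (\<lambda>x. avg_op M r f x - f x) < ennreal \<eta>)"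
    by (rule eventually_happens'[OF trivial_limit_at_right_real])
  then obtain r where "0 < r" and smooth: "\<And>f. f \<in> F \<Longrightarrow> Lp_int \<rho> p M (\<lambda>x. avg_op M r f x - f x) < ennreal \<eta>"
    by blast
  obtain K where "finite K" "K \<subseteq> F"
    and K: "\<And>f. f \<in> F \<Longrightarrow> \<exists>g\<in>K. Lp_int \<rho> p M (\<lambda>x. f x - g x) \<le> ennreal (5 * 3 powr p * \<eta>)"
    by (rule finite_Lp_net[OF F \<open>0 \<le> A\<close> \<open>0 < r\<close> proper[OF closed_cball bounded_cball] \<open>0 < \<eta>\<close>
          less_imp_le[OF tail] less_imp_le[OF smooth] that])
  have "ennreal (5 * 3 powr p * \<eta>) < ennreal (\<epsilon> powr p)"
    using \<open>5 * 3 powr p * \<eta> < \<epsilon> powr p\<close> \<open>0 < \<epsilon>\<close> by (intro ennreal_lessI) auto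
  then have "\<exists>g\<in>K. Lp_norm \<rho> p M (\<lambda>x. f x - g x) < ennreal \<epsilon>" if "f \<in> F" for f
    using K[OF that] \<open>0 < p\<close> \<open>0 < \<epsilon>\<close> by (auto simp: Lp_norm_less_iff intro: le_less_trans)
  then show "\<exists>K. finite K \<and> K \<subseteq> F \<and> (\<forall>f\<in>F. \<exists>g\<in>K. Lp_norm \<rho> p M (\<lambda>x. f x - g x) < ennreal \<epsilon>)"
    using \<open>finite K\<close> \<open>K \<subseteq> F\<close> by blast
qed

end

section \<open>Matrix weights\<close>

lemma opnorm_nonneg: "0 \<le> opnorm A"
  unfolding opnorm_def by (rule onorm_pos_le) simp

lemma norm_matrix_vector_le: "norm (A *v v) \<le> opnorm A * norm v"
  unfolding opnorm_def by (rule onorm) simp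

lemma matrix_inv_mult_self:
  fixes A :: "'a::field^'n^'n"
  assumes "\<And>v. A *v v = 0 \<Longrightarrow> v = 0"
  shows "matrix_inv A ** A = mat 1"
proof -
  have "invertible A"
    using assms matrix_left_invertible_ker invertible_left_inverse by blast
  then show ?thesis
    unfolding invertible_def matrix_inv_def by (metis (mono_tags, lifting) someI_ex)
qed

lemma norm_le_opnorm_matrix_inv:
  assumes "matrix_inv A ** A = mat 1"
  shows "norm v \<le> opnorm (matrix_inv A) * norm (A *v v)"
proof -
  have "norm v = norm (matrix_inv A *v (A *v v))"
    using assms by (simp add: matrix_vector_mul_assoc)
  also have "\<dots> \<le> opnorm (matrix_inv A) * norm (A *v v)"
    by (rule norm_matrix_vector_le)
  finally show ?thesis .
qed

lemma comparable_norm_family_matrix_weight: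
  fixes M :: "'a::metric_space measure" and \<rho> :: "'a \<Rightarrow> complex^'n \<Rightarrow> real" and W :: "'a \<Rightarrow> complex^'n^'n"
  assumes "metric_measure_space M" "1 < p"
    and norms: "\<And>x. is_cnorm (\<rho> x)"
    and "\<And>f. f \<in> borel_measurable M \<Longrightarrow> (\<lambda>x. \<rho> x (f x)) \<in> borel_measurable M"
    and W_equiv: "\<And>x v. \<rho> x v \<le> norm (W x *v v) \<and> norm (W x *v v) \<le> sqrt (real CARD('n)) * \<rho> x v"
    and "loc_integrable M (\<lambda>x. (opnorm (W x)) powr p)"
    and W_inv: "loc_integrable M (\<lambda>x. (opnorm (matrix_inv (W x))) powr (p / (p - 1)))"
  shows "comparable_norm_family M \<rho> p (\<lambda>x. sqrt (real CARD('n)) * opnorm (matrix_inv (W x))) (\<lambda>x. opnorm (W x))"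
proof -
  let ?d = "sqrt (real CARD('n))"
  have inverse: "matrix_inv (W x) ** W x = mat 1" for x
  proof (rule matrix_inv_mult_self)
    fix v assume "W x *v v = 0"
    then have "\<rho> x v \<le> 0"
      using W_equiv[of x v] by simp
    moreover have "0 \<le> \<rho> x v" "\<rho> x v = 0 \<Longrightarrow> v = 0"
      using norms[of x] by (auto simp: is_cnorm_def)
    ultimately show "v = 0"
      by linarith
  qed
  have lower: "norm v \<le> ?d * opnorm (matrix_inv (W x)) * \<rho> x v" for x v
  proof -
    have "norm v \<le> opnorm (matrix_inv (W x)) * norm (W x *v v)"
      by (rule norm_le_opnorm_matrix_inv[OF inverse])
    also have "\<dots> \<le> opnorm (matrix_inv (W x)) * (?d * \<rho> x v)"
      using W_equiv[of x v] opnorm_nonneg by (intro mult_left_mono) auto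
    finally show ?thesis
      by (simp add: mult_ac)
  qed
  have upper: "\<rho> x v \<le> opnorm (W x) * norm v" for x v
    using W_equiv[of x v] norm_matrix_vector_le[of "W x" v] by linarith
  have lower_nonneg: "0 \<le> ?d * opnorm (matrix_inv (W x))" for x
    by (simp add: opnorm_nonneg)
  have lower_loc: "loc_integrable M (\<lambda>x. (?d * opnorm (matrix_inv (W x))) powr (p / (p - 1)))"
    using loc_integrable_cmult[OF W_inv, of "?d powr (p / (p - 1))"] opnorm_nonneg
    by (simp add: powr_mult)
  show ?thesis
    by (intro comparable_norm_family.intro dominating_norm_family.intro comparable_norm_family_axioms.intro
        dominating_norm_family_axioms.intro) (fact assms lower upper lower_nonneg lower_loc opnorm_nonneg)+
qed

theorem theorem4p5:
  fixes M :: "'a::metric_space measure"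
    and \<rho> :: "'a \<Rightarrow> complex^'n \<Rightarrow> real"
    and W :: "'a \<Rightarrow> complex^'n^'n"
    and p :: real
    and F :: "('a \<Rightarrow> complex^'n) set"
  assumes borel: "sets M = sets borel"
    and open_pos: "\<And>U. open U \<Longrightarrow> U \<noteq> {} \<Longrightarrow> emeasure M U > 0"
    and bdd_fin: "\<And>S. bounded S \<Longrightarrow> emeasure M S < \<infinity>"
    and proper: "\<And>S::'a set. closed S \<Longrightarrow> bounded S \<Longrightarrow> compact S"
    and mu_cont: "\<And>x r. r > 0 \<Longrightarrow>
        ((\<lambda>y. measure M ((ball x r - ball y r) \<union> (ball y r - ball x r))) \<longlongrightarrow> 0) (at x)"
    and p: "1 < p"
    and norms: "\<And>x. is_cnorm (\<rho> x)"
    and W_pd: "\<And>x. self_adjoint (W x) \<and> pos_def (W x)"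
    and W_equiv: "\<And>x v. \<rho> x v \<le> norm (W x *v v) \<and> norm (W x *v v) \<le> sqrt (real CARD('n)) * \<rho> x v"
    and W_weight: "invertible_matrix_weight M W"
    and W_p: "loc_integrable M (\<lambda>x. (opnorm (W x)) powr p)"
    and W_inv_p': "loc_integrable M (\<lambda>x. (opnorm (matrix_inv (W x))) powr (p / (p - 1)))"
    and rho_meas: "\<And>f. f \<in> borel_measurable M \<Longrightarrow> (\<lambda>x. \<rho> x (f x)) \<in> borel_measurable M"
    and F_sub: "F \<subseteq> Lp_space \<rho> p M"
    and cond_a: "(SUP f\<in>F. Lp_norm \<rho> p M f) < \<infinity>"
    and cond_b: "\<exists>x0. ((\<lambda>R. SUP f\<in>F. Lp_norm \<rho> p M (\<lambda>x. indicator (UNIV - ball x0 R) x *\<^sub>R f x))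
                        \<longlongrightarrow> 0) at_top"
    and cond_c: "((\<lambda>r. SUP f\<in>F. Lp_norm \<rho> p M (\<lambda>x. avg_op M r f x - f x)) \<longlongrightarrow> 0) (at_right 0)"
  shows "Lp_totally_bounded \<rho> p M F"
proof -
  have "metric_measure_space M"
    using borel open_pos bdd_fin mu_cont by unfold_locales
  then interpret comparable_norm_family M \<rho> p
      "\<lambda>x. sqrt (real CARD('n)) * opnorm (matrix_inv (W x))" "\<lambda>x. opnorm (W x)"
    by (rule comparable_norm_family_matrix_weight[OF _ p norms rho_meas W_equiv W_p W_inv_p'])
  show ?thesis
    by (rule Kolmogorov_Riesz[OF proper F_sub cond_a cond_b cond_c])
qed

end
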